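(* Let designer $j$ have a participation objective with threshold $\theta_j\in[0,1]$ and budget $T_j>0$, and fix arbitrary prize structures for the other designers. Then the maximum of $\hat R_j(x_{\vec w_j},x_{-j}^{-1},\theta_j)$ over feasible prize structures $\vec w_j$ is attained by a simple contest $\vec w_j^{(k^*,T_j)}$ for some $k^*\in[n]$. Moreover, letting $\phi^*:=\Phi_j^*(\theta_j;x_{\vec w_j^{(k^*,T_j)}},x_{-j}^{-1})$, this $k^*$ satisfies $k^*\in\arg\max_{k\in[n]}\xi_k(\phi^* )$.
   Context: Model. There are $m\ge1$ contests/designers with budgets $T_j$, and $n\ge2$ contestants. Prize structures. A feasible prize structure is $\vec w_j$ with $w_{j,1}\ge\dots\ge w_{j,n}\ge0$ and $\sum_kw_{j,k}\le T_j$. Contestants. Contestant quantiles $q_i$ are i.i.d. $U[0,1]$ with skill $v(q_i)$, where $v$ is strictly decreasing. Contestants choose a contest and an effort; they are ranked by effort within the contest, the rank-$k$ participant gets $w_{j,k}$, and utility is skill times prize minus effort. Interim allocation function. $x_{\vec w_j}(\phi)=x_j(\phi)=\sum_kw_{j,k}\binom{n-1}{k-1}\phi^{k-1}(1-\phi)^{n-k}$. Inverse notation. $x_j^{-1}(y):=\max\{\phi\in[0,1]:x_j(\phi)\ge y\}$ (and $0$ if $x_j(0)<y$); $x_{-j}^{-1}:=\sum_{j'\ne j}x_{j'}^{-1}$; $Q:=x_j^{-1}+x_{-j}^{-1}$; $Q^{-1}(q):=\sup\{y:Q(y)\ge q\}$. Selected equilibrium participation. $\Phi_j^*(q;x_j,x_{-j}^{-1})$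 is the probability that a contestant has quantile $\le q$ and enters contest $j$. - It equals $x_j^{-1}(Q^{-1}(q))$ when $x_j$ is strictly decreasing. - When several contests have identical constant interim allocation functions with the maximal constant value, participants are divided equally among them. Precisely: if $M_1^*$ is that set, $x^*$ the common value, and $q^*=\min\{1,\sum_{j'\text{ strictly decreasing}}x_{j'}^{-1}(x^* )\}$, then each $j\in M_1^*$ has $\Phi_j^*(q)=\max\{0,q-q^*\}/|M_1^*|$. - Constant contests with smaller value get $\Phi_j^*\equiv0$. Participation objective. $\hat R_j(x_j,x_{-j}^{-1},\theta_j)=n\,\Phi_j^*(\theta_j;x_j,x_{-j}^{-1})$, the expected number of participants in contest $j$ with quantile $\le\theta_j$. Simple contests. $\vec w_j^{(k,T)}$ gives $T/k$ to each of ranks $1,\dots,k$ and $0$ to the rest. $\xi_k(\phi):=x_{\vec w^{(k,1)}}(\phi)=\frac1k\sum_{l=1}^k\binom{n-1}{l-1}\phi^{l-1}(1-\phi)^{n-l}$. *)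

theory Defs
  imports "HOL-Analysis.Analysis" "HOL-Library.Extended_Real"
begin

text \<open>Prize structures are functions w :: nat => real; only ranks 1..n matter.\<close>

definition feasible :: "nat \<Rightarrow> real \<Rightarrow> (nat \<Rightarrow> real) \<Rightarrow> bool" where
  "feasible n T w \<longleftrightarrow> (\<forall>k\<in>{1..<n}. w (Suc k) \<le> w k) \<and> w n \<ge> 0 \<and> (\<Sum>k=1..n. w k) \<le> T"

definition interim :: "nat \<Rightarrow> (nat \<Rightarrow> real) \<Rightarrow> real \<Rightarrow> real" where
  "interim n w \<phi> = (\<Sum>k=1..n. w k * real ((n - 1) choose (k - 1)) * \<phi> ^ (k - 1) * (1 - \<phi>) ^ (n - k))"

text \<open>The argument is taken in the extended reals so that Q^{-1}(q) = +infinity/-infinity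
  (unbounded / empty sup) is handled by the same formula.\<close>
definition xinv :: "(real \<Rightarrow> real) \<Rightarrow> ereal \<Rightarrow> real" where
  "xinv x y = (if ereal (x 0) < y then 0
               else (GREATEST \<phi>. \<phi> \<in> {0..1} \<and> y \<le> ereal (x \<phi>)))"

definition Qfun :: "nat \<Rightarrow> (nat \<Rightarrow> real \<Rightarrow> real) \<Rightarrow> real \<Rightarrow> real" where
  "Qfun m xs y = (\<Sum>j'<m. xinv (xs j') (ereal y))"

definition Qinv :: "nat \<Rightarrow> (nat \<Rightarrow> real \<Rightarrow> real) \<Rightarrow> real \<Rightarrow> ereal" where
  "Qinv m xs q = Sup {ereal y | y. q \<le> Qfun m xs y}"

definition strictly_decr :: "(real \<Rightarrow> real) \<Rightarrow> bool" where
  "strictly_decr x \<longleftrightarrow> (\<forall>a b. 0 \<le> a \<and> a < b \<and> b \<le> 1 \<longrightarrow> x b < x a)"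

definition const_on01 :: "(real \<Rightarrow> real) \<Rightarrow> bool" where
  "const_on01 x \<longleftrightarrow> (\<forall>\<phi>\<in>{0..1}. x \<phi> = x 0)"

text \<open>Contests are indexed by 0..<m,
  ws j' is the prize structure of contest j'.  (For feasible prize structures the
  interim allocation is either strictly decreasing or constant on [0,1], so the final
  else-branch is never used.)\<close>
definition Phi_star :: "nat \<Rightarrow> nat \<Rightarrow> (nat \<Rightarrow> nat \<Rightarrow> real) \<Rightarrow> nat \<Rightarrow> real \<Rightarrow> real" where
  "Phi_star n m ws j q =
    (let xs = (\<lambda>j'. interim n (ws j'));
         C = {j'. j' < m \<and> const_on01 (xs j')};
         xstar = Max ((\<lambda>j'. xs j' 0) ` C);
         M1 = {j'\<in>C. xs j' 0 = xstar};
         qstar = min 1 (\<Sum>j'\<in>{j'. j' < m \<and> strictly_decr (xs j')}. xinv (xs j') (ereal xstar))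
     in if strictly_decr (xs j) then xinv (xs j) (Qinv m xs q)
        else if const_on01 (xs j) then
          (if j \<in> M1 then max 0 (q - qstar) / real (card M1) else 0)
        else 0)"

definition R_hat :: "nat \<Rightarrow> nat \<Rightarrow> (nat \<Rightarrow> nat \<Rightarrow> real) \<Rightarrow> nat \<Rightarrow> real \<Rightarrow> real" where
  "R_hat n m ws j \<theta> = real n * Phi_star n m ws j \<theta>"

definition simple :: "nat \<Rightarrow> real \<Rightarrow> nat \<Rightarrow> real" where
  "simple k T = (\<lambda>l. if 1 \<le> l \<and> l \<le> k then T / real k else 0)"

definition xi :: "nat \<Rightarrow> nat \<Rightarrow> real \<Rightarrow> real" where
  "xi n k \<phi> = (1 / real k) * (\<Sum>l=1..k. real ((n - 1) choose (l - 1)) * \<phi> ^ (l - 1) * (1 - \<phi>) ^ (n - l))"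

end

theory Submission
  imports Defs
begin

text \<open>Summation by parts against the partial sums of the Bernstein basis of degree \<open>n - 1\<close>
  writes a feasible interim allocation as a nonnegative combination of the allocations
  \<open>T \<xi>\<^sub>k\<close> of the simple contests with total weight at most one, so it lies pointwise below
  the envelope \<open>max\<^sub>k T \<xi>\<^sub>k\<close>. For a strictly decreasing allocation \<open>x\<close> one has
  \<open>\<phi> \<le> \<Phi>\<^sup>*\<close> iff \<open>\<psi> + x\<^sub>-\<^sub>j\<^sup>-\<^sup>1(x \<psi>) < \<theta>\<close> for all \<open>\<psi> < \<phi>\<close>; applying this criterion to the envelope
  defines a level \<open>\<phi>\<^sup>*\<close> that no feasible contest exceeds (constant allocations are treated
  directly). Conversely the simple contest maximising \<open>\<xi>\<^sub>k(\<phi>\<^sup>*)\<close> dominates the envelope just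
  to the left of \<open>\<phi>\<^sup>*\<close> by continuity, and so attains \<open>\<phi>\<^sup>*\<close>.\<close>

lemma finite_ex_arg_max:
  fixes f :: "'a \<Rightarrow> 'b::linorder"
  assumes "finite A" "A \<noteq> {}"
  shows "\<exists>x\<in>A. \<forall>y\<in>A. f y \<le> f x"
  using Max_in[of "f ` A"] Max_ge[of "f ` A"] assms by fastforce

lemma summation_by_parts:
  fixes a b :: "nat \<Rightarrow> real"
  shows "(\<Sum>l=1..N. a l * b l) = (\<Sum>k=1..<N. (a k - a (Suc k)) * (\<Sum>l=1..k. b l)) + a N * (\<Sum>l=1..N. b l)"
proof (induction N)
  case (Suc N)
  then show ?case
    by (cases "N = 0") (simp_all add: algebra_simps)
qed simp

section \<open>Partial sums of Bernstein polynomials\<close>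

definition Bernstein_sum :: "nat \<Rightarrow> nat \<Rightarrow> real \<Rightarrow> real" where
  "Bernstein_sum N k x = (\<Sum>i<k. Bernstein N i x)"

lemma Bernstein_sum_Suc: "Bernstein_sum N (Suc k) x = Bernstein_sum N k x + Bernstein N k x"
  by (simp add: Bernstein_sum_def)

lemma Bernstein_sum_full: "Bernstein_sum N (Suc N) x = 1"
  by (simp add: Bernstein_sum_def lessThan_Suc_atMost)

lemma Bernstein_sum_self: "Bernstein_sum N N x = 1 - x ^ N"
  using Bernstein_sum_full[of N x] by (simp add: Bernstein_sum_Suc Bernstein_def)

lemma Bernstein_sum_nonneg: "0 \<le> x \<Longrightarrow> x \<le> 1 \<Longrightarrow> 0 \<le> Bernstein_sum N k x"
  unfolding Bernstein_sum_def by (intro sum_nonneg Bernstein_nonneg)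

lemma Bernstein_sum_at_1: "k \<le> N \<Longrightarrow> Bernstein_sum N k 1 = 0"
  unfolding Bernstein_sum_def Bernstein_def by (intro sum.neutral) auto

lemma continuous_on_Bernstein_sum: "continuous_on A (Bernstein_sum N k)"
  unfolding Bernstein_sum_def Bernstein_def by (intro continuous_intros)

lemma has_real_derivative_Bernstein_Suc:
  assumes "k < M"
  shows "(Bernstein (Suc M) (Suc k) has_real_derivative
           real (Suc M) * (Bernstein M k x - Bernstein M (Suc k) x)) (at x)"
proof -
  define r where "r = M - Suc k"
  have r: "M - k = Suc r" "M - Suc k = r" using assms by (simp_all add: r_def Suc_diff_Suc)
  define C where "C = real (Suc M choose Suc k)"
  have up: "C * real (Suc k) = real (Suc M) * real (M choose k)"
    unfolding C_def using Suc_times_binomial_eq[of M k] by (metis of_nat_mult)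
  have down: "C * real (Suc r) = real (Suc M) * real (M choose Suc k)"
    unfolding C_def using binomial_absorb_comp[of "Suc M" "Suc k"] r
    by (metis diff_Suc_Suc mult.commute of_nat_mult diff_Suc_1)
  have "((\<lambda>x. C * x ^ Suc k * (1 - x) ^ Suc r) has_real_derivative
          C * (real (Suc k) * x ^ k * (1 - x) ^ Suc r - x ^ Suc k * (real (Suc r) * (1 - x) ^ r))) (at x)"
    by (rule derivative_eq_intros refl | simp)+ (simp add: algebra_simps)
  also have "C * (real (Suc k) * x ^ k * (1 - x) ^ Suc r - x ^ Suc k * (real (Suc r) * (1 - x) ^ r))
    = (C * real (Suc k)) * x ^ k * (1 - x) ^ Suc r - (C * real (Suc r)) * x ^ Suc k * (1 - x) ^ r"
    by (simp only: right_diff_distrib mult_ac)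
  also have "\<dots> = real (Suc M) * (Bernstein M k x - Bernstein M (Suc k) x)"
    unfolding up down Bernstein_def r by (simp only: right_diff_distrib mult_ac)
  finally show ?thesis
    unfolding Bernstein_def C_def diff_Suc_Suc r(1) .
qed

lemma has_real_derivative_Bernstein_sum:
  assumes "k \<le> M"
  shows "(Bernstein_sum (Suc M) (Suc k) has_real_derivative - (real (Suc M) * Bernstein M k x)) (at x)"
  using assms
proof (induction k)
  case 0
  have "Bernstein_sum (Suc M) (Suc 0) = (\<lambda>x. (1 - x) ^ Suc M)"
    by (simp add: fun_eq_iff Bernstein_sum_def Bernstein_def)
  moreover have "((\<lambda>x. (1 - x) ^ Suc M) has_real_derivative - (real (Suc M) * (1 - x) ^ M)) (at x)"
    by (rule derivative_eq_intros refl)+ simp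
  ultimately show ?case by (simp add: Bernstein_def)
next
  case (Suc k)
  have "Bernstein_sum (Suc M) (Suc (Suc k)) = (\<lambda>x. Bernstein_sum (Suc M) (Suc k) x + Bernstein (Suc M) (Suc k) x)"
    by (simp add: fun_eq_iff Bernstein_sum_Suc)
  moreover have "((\<lambda>x. Bernstein_sum (Suc M) (Suc k) x + Bernstein (Suc M) (Suc k) x) has_real_derivative
      - (real (Suc M) * Bernstein M k x) + real (Suc M) * (Bernstein M k x - Bernstein M (Suc k) x)) (at x)"
    using Suc by (intro DERIV_add has_real_derivative_Bernstein_Suc) auto
  ultimately show ?case by (simp add: algebra_simps)
qed

lemma Bernstein_sum_strict_antimono:
  assumes "1 \<le> k" "k \<le> N" "0 \<le> a" "a < b" "b \<le> 1"
  shows "Bernstein_sum N k b < Bernstein_sum N k a"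
proof -
  obtain M k' where N: "N = Suc M" and k: "k = Suc k'" and "k' \<le> M"
    using assms(1,2) by (metis Suc_le_D Suc_le_mono One_nat_def)
  show ?thesis
  proof (rule DERIV_neg_imp_decreasing_open[OF \<open>a < b\<close>])
    fix x assume "a < x" "x < b"
    then have "0 < real (Suc M) * Bernstein M k' x"
      using assms \<open>k' \<le> M\<close> by (intro mult_pos_pos Bernstein_pos) auto
    then show "\<exists>y. (Bernstein_sum N k has_real_derivative y) (at x) \<and> y < 0"
      unfolding N k using has_real_derivative_Bernstein_sum[OF \<open>k' \<le> M\<close>] by (intro exI conjI) auto
  qed (rule continuous_on_Bernstein_sum)
qed

lemma sum_Bernstein_shift: "(\<Sum>l=1..k. Bernstein N (l - 1) x) = Bernstein_sum N k x"
  unfolding Bernstein_sum_def sum_bounds_lt_plus1[symmetric] by simp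

lemma xi_eq_Bernstein_sum: "xi n k x = Bernstein_sum (n - 1) k x / real k"
  unfolding xi_def Bernstein_sum_def Bernstein_def sum_bounds_lt_plus1[symmetric]
  by simp

lemma xi_self: "1 \<le> n \<Longrightarrow> xi n n x = 1 / real n"
  using Bernstein_sum_full[of "n - 1" x] by (simp add: xi_eq_Bernstein_sum)

lemma xi_strict_antimono:
  assumes "1 \<le> k" "k < n" "0 \<le> a" "a < b" "b \<le> 1"
  shows "xi n k b < xi n k a"
  using Bernstein_sum_strict_antimono[of k "n - 1" a b] assms
  by (simp add: xi_eq_Bernstein_sum divide_strict_right_mono)

lemma xi_pred_gt:
  assumes "2 \<le> n" "0 \<le> x" "x < 1/2"
  shows "1 / real n < xi n (n - 1) x"
proof -
  define N where "N = n - 1"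
  have N: "1 \<le> N" "n = Suc N" using assms(1) by (simp_all add: N_def)
  have "x ^ N < (1/2) ^ N" using assms N by (intro power_strict_mono) auto
  also have "(1/2) ^ N \<le> 1 / real (Suc N)"
  proof -
    have "real (Suc N) \<le> 2 ^ N" using less_exp[of N] by (metis Suc_leI of_nat_le_iff of_nat_numeral of_nat_power)
    then show ?thesis by (simp add: power_divide divide_simps)
  qed
  finally have "real (Suc N) * x ^ N < 1" by (simp add: field_simps)
  then show ?thesis
    using N by (simp add: xi_eq_Bernstein_sum Bernstein_sum_self N_def[symmetric] field_simps)
qed

lemma eventually_at_left_xi_less:
  assumes "T * xi n k p < a"
  shows "eventually (\<lambda>x. T * xi n k x < a) (at_left p)"
proof -
  have "isCont (\<lambda>x. T * xi n k x) p" unfolding xi_def by (intro continuous_intros)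
  then have "((\<lambda>x. T * xi n k x) \<longlongrightarrow> T * xi n k p) (at_left p)"
    by (simp add: isCont_def filterlim_at_split)
  then show ?thesis using assms by (rule order_tendstoD(2))
qed

section \<open>Interim allocations of feasible prize structures\<close>

lemma interim_eq_Bernstein_sum:
  assumes "1 \<le> n"
  shows "interim n w x = (\<Sum>k=1..<n. (w k - w (Suc k)) * Bernstein_sum (n - 1) k x) + w n"
proof -
  have "interim n w x = (\<Sum>l=1..n. w l * Bernstein (n - 1) (l - 1) x)"
    unfolding interim_def Bernstein_def by (intro sum.cong) (auto simp: algebra_simps)
  also have "\<dots> = (\<Sum>k=1..<n. (w k - w (Suc k)) * Bernstein_sum (n - 1) k x) + w n * Bernstein_sum (n - 1) n x"
    by (simp only: summation_by_parts sum_Bernstein_shift)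
  also have "Bernstein_sum (n - 1) n x = 1"
    using Bernstein_sum_full[of "n - 1"] assms by simp
  finally show ?thesis by simp
qed

lemma continuous_on_interim: "continuous_on A (interim n w)"
  unfolding interim_def by (intro continuous_intros)

lemma interim_at_1:
  assumes "1 \<le> n"
  shows "interim n w 1 = w n"
proof -
  have "\<forall>k\<in>{1..<n}. Bernstein_sum (n - 1) k 1 = 0"
    using Bernstein_sum_at_1[of _ "n - 1"] by auto
  then show ?thesis by (simp add: interim_eq_Bernstein_sum[OF assms])
qed

lemma feasible_decrement_nonneg: "feasible n T w \<Longrightarrow> k \<in> {1..<n} \<Longrightarrow> 0 \<le> w k - w (Suc k)"
  by (auto simp: feasible_def)

lemma sum_eq_sum_decrements: "(\<Sum>l=1..n. w l) = (\<Sum>k=1..<n. (w k - w (Suc k)) * real k) + w n * real n"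
  using summation_by_parts[of w "\<lambda>l. 1" n] by simp

lemma feasible_last_prize_le: "feasible n T w \<Longrightarrow> real n * w n \<le> T"
  using sum_eq_sum_decrements[of w n] feasible_decrement_nonneg[of n T w]
    sum_nonneg[of "{1..<n}" "\<lambda>k. (w k - w (Suc k)) * real k"]
  by (auto simp: feasible_def mult.commute)

lemma interim_feasible_cases:
  assumes "feasible n T w" "1 \<le> n"
  shows "strictly_decr (interim n w) \<or> const_on01 (interim n w)"
proof (cases "\<forall>k\<in>{1..<n}. w k = w (Suc k)")
  case True
  then show ?thesis by (simp add: const_on01_def interim_eq_Bernstein_sum[OF assms(2)])
next
  case False
  then obtain k0 where k0: "k0 \<in> {1..<n}" "w (Suc k0) < w k0"
    using feasible_decrement_nonneg[OF assms(1)] by fastforce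
  have "interim n w b < interim n w a" if "0 \<le> a" "a < b" "b \<le> 1" for a b
  proof -
    have decr: "Bernstein_sum (n - 1) k b < Bernstein_sum (n - 1) k a" if "k \<in> {1..<n}" for k
      using Bernstein_sum_strict_antimono[of k "n - 1" a b] \<open>0 \<le> a\<close> \<open>a < b\<close> \<open>b \<le> 1\<close> that by auto
    have "(\<Sum>k=1..<n. (w k - w (Suc k)) * Bernstein_sum (n - 1) k b)
        < (\<Sum>k=1..<n. (w k - w (Suc k)) * Bernstein_sum (n - 1) k a)"
    proof (rule sum_strict_mono_ex1)
      show "\<forall>k\<in>{1..<n}. (w k - w (Suc k)) * Bernstein_sum (n - 1) k b
                        \<le> (w k - w (Suc k)) * Bernstein_sum (n - 1) k a"
        by (intro ballI mult_left_mono less_imp_le[OF decr] feasible_decrement_nonneg[OF assms(1)])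
      show "\<exists>k\<in>{1..<n}. (w k - w (Suc k)) * Bernstein_sum (n - 1) k b
                        < (w k - w (Suc k)) * Bernstein_sum (n - 1) k a"
        using k0 decr by (intro bexI[of _ k0] mult_strict_left_mono) auto
    qed simp
    then show ?thesis by (simp add: interim_eq_Bernstein_sum[OF assms(2)])
  qed
  then show ?thesis by (simp add: strictly_decr_def)
qed

lemma interim_le_simple_envelope:
  assumes "feasible n T w" "1 \<le> n" "0 \<le> x" "x \<le> 1"
  shows "\<exists>k\<in>{1..n}. interim n w x \<le> T * xi n k x"
proof -
  obtain k0 where k0: "k0 \<in> {1..n}" and max: "\<And>k. k \<in> {1..n} \<Longrightarrow> xi n k x \<le> xi n k0 x"
    using finite_ex_arg_max[of "{1..n}" "\<lambda>k. xi n k x"] assms(2) by auto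
  define M where "M = xi n k0 x"
  have "0 \<le> M" unfolding M_def xi_eq_Bernstein_sum using Bernstein_sum_nonneg assms(3,4) by simp
  have sum_le: "Bernstein_sum (n - 1) k x \<le> real k * M" if "k \<in> {1..n}" for k
    using max[OF that] that by (simp add: M_def xi_eq_Bernstein_sum field_simps)
  have "interim n w x = (\<Sum>k=1..<n. (w k - w (Suc k)) * Bernstein_sum (n - 1) k x) + w n * Bernstein_sum (n - 1) n x"
    using interim_eq_Bernstein_sum[OF assms(2)] Bernstein_sum_full[of "n - 1"] assms(2) by simp
  also have "\<dots> \<le> (\<Sum>k=1..<n. (w k - w (Suc k)) * (real k * M)) + w n * (real n * M)"
    using feasible_decrement_nonneg[OF assms(1)] sum_le assms(1,2)
    by (intro add_mono sum_mono mult_left_mono) (auto simp: feasible_def)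
  also have "\<dots> = M * ((\<Sum>k=1..<n. (w k - w (Suc k)) * real k) + w n * real n)"
    by (simp add: sum_distrib_left algebra_simps)
  also have "\<dots> = M * (\<Sum>l=1..n. w l)"
    by (simp only: sum_eq_sum_decrements)
  also have "\<dots> \<le> M * T"
    using assms(1) \<open>0 \<le> M\<close> by (intro mult_left_mono) (auto simp: feasible_def)
  finally show ?thesis using k0 by (auto simp: M_def mult.commute)
qed

lemma sum_simple:
  assumes "k \<le> n"
  shows "(\<Sum>l=1..n. simple k T l * f l) = T / real k * (\<Sum>l=1..k. f l)"
proof -
  have "(\<Sum>l=1..n. simple k T l * f l) = (\<Sum>l\<in>{l\<in>{1..n}. l \<le> k}. T / real k * f l)"
    unfolding sum.inter_filter[OF finite_atLeastAtMost] by (intro sum.cong) (auto simp: simple_def)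
  also have "{l\<in>{1..n}. l \<le> k} = {1..k}" using assms by auto
  finally show ?thesis by (simp add: sum_distrib_left)
qed

lemma interim_simple:
  assumes "k \<le> n"
  shows "interim n (simple k T) x = T * xi n k x"
proof -
  have "interim n (simple k T) x = (\<Sum>l=1..n. simple k T l * Bernstein (n - 1) (l - 1) x)"
    unfolding interim_def Bernstein_def by (intro sum.cong) (auto simp: algebra_simps)
  then show ?thesis
    unfolding sum_simple[OF assms] sum_Bernstein_shift xi_eq_Bernstein_sum by simp
qed

lemma feasible_simple:
  assumes "1 \<le> k" "k \<le> n" "0 \<le> T"
  shows "feasible n T (simple k T)"
  using sum_simple[OF assms(2), of T "\<lambda>l. 1"] assms by (auto simp: feasible_def simple_def)

lemma strictly_decr_interim_simple:
  assumes "1 \<le> k" "k < n" "0 < T"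
  shows "strictly_decr (interim n (simple k T))"
  using Bernstein_sum_strict_antimono[of k "n - 1"] assms
  by (auto simp: strictly_decr_def interim_simple xi_eq_Bernstein_sum divide_strict_right_mono)

section \<open>Generalised inverses\<close>

lemma strictly_decr_le: "strictly_decr x \<Longrightarrow> 0 \<le> a \<Longrightarrow> a \<le> b \<Longrightarrow> b \<le> 1 \<Longrightarrow> x b \<le> x a"
  unfolding strictly_decr_def by (cases "a = b") (auto intro: less_imp_le)

lemma const_on01_at_1: "const_on01 x \<Longrightarrow> x 1 = x 0"
  unfolding const_on01_def by (erule bspec) simp

lemma const_on01_not_strictly_decr: "const_on01 x \<Longrightarrow> \<not> strictly_decr x"
  unfolding const_on01_def strictly_decr_def
  by (metis atLeastAtMost_iff order_refl zero_le_one zero_less_one less_irrefl)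

lemma xinv_greatest:
  assumes "continuous_on {0..1} x" "Y \<le> ereal (x 0)"
  shows "xinv x Y \<in> {0..1}" "Y \<le> ereal (x (xinv x Y))"
    and "\<And>b. b \<in> {0..1} \<Longrightarrow> Y \<le> ereal (x b) \<Longrightarrow> b \<le> xinv x Y"
proof -
  define A where "A = {0..1} \<inter> (\<lambda>b. ereal (x b)) -` {Y..}"
  have "closed A"
    unfolding A_def
    by (rule continuous_closed_preimage[OF continuous_on_ereal[OF assms(1)] closed_atLeastAtMost closed_atLeast])
  then have "compact ({0..1} \<inter> A)" by (intro compact_Int_closed) auto
  moreover have "{0..1} \<inter> A = A" by (auto simp: A_def)
  ultimately have "compact A" by simp
  moreover have "0 \<in> A" using assms(2) by (simp add: A_def)
  ultimately obtain a where a: "a \<in> A" "\<And>b. b \<in> A \<Longrightarrow> b \<le> a"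
    using compact_attains_sup[of A] by blast
  have "xinv x Y = a"
    unfolding xinv_def using assms(2) a(1) a(2)[unfolded A_def]
    by (simp add: not_less A_def) (rule Greatest_equality; simp)
  then show "xinv x Y \<in> {0..1}" "Y \<le> ereal (x (xinv x Y))"
    and "\<And>b. b \<in> {0..1} \<Longrightarrow> Y \<le> ereal (x b) \<Longrightarrow> b \<le> xinv x Y"
    using a by (auto simp: A_def)
qed

lemma xinv_eq_0: "ereal (x 0) < Y \<Longrightarrow> xinv x Y = 0"
  by (simp add: xinv_def)

lemma xinv_range: "continuous_on {0..1} x \<Longrightarrow> xinv x Y \<in> {0..1}"
  using xinv_greatest(1)[of x Y] by (cases "ereal (x 0) < Y") (simp_all add: xinv_eq_0 not_less)

lemma xinv_antimono:
  assumes "continuous_on {0..1} x" "Y1 \<le> Y2"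
  shows "xinv x Y2 \<le> xinv x Y1"
proof (cases "ereal (x 0) < Y2")
  case True
  then show ?thesis using xinv_range[OF assms(1), of Y1] by (simp add: xinv_eq_0)
next
  case False
  then have Y2: "Y2 \<le> ereal (x 0)" by simp
  then have "Y1 \<le> ereal (x (xinv x Y2))"
    using xinv_greatest(2)[OF assms(1)] assms(2) order_trans by blast
  then show ?thesis
    using xinv_greatest(1)[OF assms(1) Y2] xinv_greatest(3)[OF assms(1) order_trans[OF assms(2) Y2]] by blast
qed

lemma xinv_const:
  assumes "continuous_on {0..1} x" "const_on01 x" "Y \<le> ereal (x 0)"
  shows "xinv x Y = 1"
proof -
  have "1 \<le> xinv x Y"
    using xinv_greatest(3)[OF assms(1,3), of 1] assms(3) const_on01_at_1[OF assms(2)] by simp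
  then show ?thesis using xinv_greatest(1)[OF assms(1,3)] by simp
qed

lemma below_threshold_if_le_xinv_Sup:
  fixes x G :: "real \<Rightarrow> real"
  assumes x: "continuous_on {0..1} x" "strictly_decr x"
    and \<phi>: "0 < \<phi>" "\<phi> \<le> 1"
    and le: "\<phi> \<le> xinv x (Sup {ereal y | y. \<theta> \<le> xinv x (ereal y) + G y})"
      (is "\<phi> \<le> xinv x ?Y")
  shows "\<forall>\<psi>\<in>{0..<\<phi>}. \<psi> + G (x \<psi>) < \<theta>"
proof -
  have Y0: "?Y \<le> ereal (x 0)" using le \<phi> xinv_eq_0[of x ?Y] by force
  have "x (xinv x ?Y) \<le> x \<phi>"
    using xinv_greatest(1)[OF x(1) Y0] le \<phi> by (intro strictly_decr_le[OF x(2)]) auto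
  then have Y\<phi>: "?Y \<le> ereal (x \<phi>)"
    using xinv_greatest(2)[OF x(1) Y0] order_trans by fastforce
  show "\<forall>\<psi>\<in>{0..<\<phi>}. \<psi> + G (x \<psi>) < \<theta>"
  proof (rule ballI, rule ccontr)
    fix \<psi> assume \<psi>: "\<psi> \<in> {0..<\<phi>}" and "\<not> \<psi> + G (x \<psi>) < \<theta>"
    moreover have "\<psi> \<le> xinv x (ereal (x \<psi>))"
      using \<psi> \<phi> strictly_decr_le[OF x(2), of 0 \<psi>] by (intro xinv_greatest(3)[OF x(1)]) auto
    ultimately have "ereal (x \<psi>) \<le> ?Y" by (intro Sup_upper) force
    then have "ereal (x \<psi>) \<le> ereal (x \<phi>)" using Y\<phi> by (rule order_trans)
    then have "x \<psi> \<le> x \<phi>" by simp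
    moreover have "x \<phi> < x \<psi>" using x(2) \<psi> \<phi> unfolding strictly_decr_def by auto
    ultimately show False by simp
  qed
qed

lemma le_xinv_Sup_if_below_threshold:
  fixes x G :: "real \<Rightarrow> real"
  assumes x: "continuous_on {0..1} x" "strictly_decr x"
    and G: "\<And>y1 y2. y1 \<le> y2 \<Longrightarrow> G y2 \<le> G y1"
    and \<phi>: "0 < \<phi>" "\<phi> \<le> 1"
    and H: "\<forall>\<psi>\<in>{0..<\<phi>}. \<psi> + G (x \<psi>) < \<theta>"
  shows "\<phi> \<le> xinv x (Sup {ereal y | y. \<theta> \<le> xinv x (ereal y) + G y})"
    (is "\<phi> \<le> xinv x ?Y")
proof -
  have "ereal y \<le> ereal (x \<phi>)" if y: "\<theta> \<le> xinv x (ereal y) + G y" for y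
  proof (rule ccontr)
    assume "\<not> ereal y \<le> ereal (x \<phi>)"
    then have "x \<phi> < y" by simp
    show False
    proof (cases "x 0 < y")
      case True
      then have "\<theta> \<le> G y" using y by (simp add: xinv_eq_0)
      moreover have "G y \<le> G (x 0)" using True by (intro G) simp
      moreover have "0 + G (x 0) < \<theta>" using \<phi> by (intro bspec[OF H]) simp
      ultimately show False by simp
    next
      case False
      then obtain b where b: "0 \<le> b" "b \<le> \<phi>" "x b = y"
        using IVT2'[of x \<phi> y 0] \<open>x \<phi> < y\<close> \<phi> continuous_on_subset[OF x(1), of "{0..\<phi>}"] by auto
      then have "b < \<phi>" using \<open>x \<phi> < y\<close> by (cases "b = \<phi>") auto
      then have "b < xinv x (ereal y)" using H b y by force
      then have "x (xinv x (ereal y)) < y"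
        using xinv_range[OF x(1)] x(2) b unfolding strictly_decr_def by auto
      moreover have "ereal y \<le> ereal (x (xinv x (ereal y)))"
        using False by (intro xinv_greatest(2)[OF x(1)]) simp
      ultimately show False by simp
    qed
  qed
  then have "?Y \<le> ereal (x \<phi>)" by (intro Sup_least) blast
  moreover have "x \<phi> \<le> x 0" using \<phi> by (intro strictly_decr_le[OF x(2)]) auto
  ultimately show "\<phi> \<le> xinv x ?Y"
    using \<phi> order_trans by (intro xinv_greatest(3)[OF x(1)]) force+
qed

section \<open>Equilibrium participation of contest j\<close>

definition xinv_others :: "nat \<Rightarrow> nat \<Rightarrow> (nat \<Rightarrow> nat \<Rightarrow> real) \<Rightarrow> nat \<Rightarrow> real \<Rightarrow> real" where
  "xinv_others n m ws j y = (\<Sum>j'\<in>{j'. j' < m \<and> j' \<noteq> j}. xinv (interim n (ws j')) (ereal y))"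

definition strict_others :: "nat \<Rightarrow> nat \<Rightarrow> (nat \<Rightarrow> nat \<Rightarrow> real) \<Rightarrow> nat \<Rightarrow> nat set" where
  "strict_others n m ws j = {j'. j' < m \<and> j' \<noteq> j \<and> strictly_decr (interim n (ws j'))}"

definition const_others :: "nat \<Rightarrow> nat \<Rightarrow> (nat \<Rightarrow> nat \<Rightarrow> real) \<Rightarrow> nat \<Rightarrow> nat set" where
  "const_others n m ws j = {j'. j' < m \<and> j' \<noteq> j \<and> const_on01 (interim n (ws j'))}"

lemma finite_strict_others: "finite (strict_others n m ws j)"
  unfolding strict_others_def by simp

lemma finite_const_others: "finite (const_others n m ws j)"
  unfolding const_others_def by simp

lemma xinv_others_antimono: "y1 \<le> y2 \<Longrightarrow> xinv_others n m ws j y2 \<le> xinv_others n m ws j y1"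
  unfolding xinv_others_def by (intro sum_mono xinv_antimono continuous_on_interim) simp

lemma xinv_others_split:
  assumes "1 \<le> n" "\<forall>j'<m. j' \<noteq> j \<longrightarrow> feasible n (T j') (ws j')"
  shows "xinv_others n m ws j y
       = (\<Sum>j'\<in>strict_others n m ws j. xinv (interim n (ws j')) (ereal y))
       + (\<Sum>j'\<in>const_others n m ws j. xinv (interim n (ws j')) (ereal y))"
proof -
  have "{j'. j' < m \<and> j' \<noteq> j} = strict_others n m ws j \<union> const_others n m ws j"
    using interim_feasible_cases[OF _ assms(1)] assms(2)
    unfolding strict_others_def const_others_def by blast
  moreover have "strict_others n m ws j \<inter> const_others n m ws j = {}"
    unfolding strict_others_def const_others_def using const_on01_not_strictly_decr by blast
  ultimately show ?thesis
    unfolding xinv_others_def by (simp add: sum.union_disjoint finite_strict_others finite_const_others)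
qed

lemma xinv_others_le_strict_others:
  assumes "1 \<le> n" "\<forall>j'<m. j' \<noteq> j \<longrightarrow> feasible n (T j') (ws j')"
    and "c \<le> y" "\<forall>j'\<in>const_others n m ws j. interim n (ws j') 0 < y"
  shows "xinv_others n m ws j y \<le> (\<Sum>j'\<in>strict_others n m ws j. xinv (interim n (ws j')) (ereal c))"
proof -
  have "(\<Sum>j'\<in>const_others n m ws j. xinv (interim n (ws j')) (ereal y)) = 0"
    using assms(4) by (intro sum.neutral) (auto intro: xinv_eq_0)
  moreover have "(\<Sum>j'\<in>strict_others n m ws j. xinv (interim n (ws j')) (ereal y))
      \<le> (\<Sum>j'\<in>strict_others n m ws j. xinv (interim n (ws j')) (ereal c))"
    using assms(3) by (intro sum_mono xinv_antimono continuous_on_interim) simp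
  ultimately show ?thesis using xinv_others_split[OF assms(1,2)] by simp
qed

lemma const_others_below_if_xinv_others_lt_1:
  assumes "xinv_others n m ws j c < 1"
  shows "\<forall>j'\<in>const_others n m ws j. interim n (ws j') 0 < c"
proof (rule ballI, rule ccontr)
  fix j' assume j': "j' \<in> const_others n m ws j" and "\<not> interim n (ws j') 0 < c"
  then have "xinv (interim n (ws j')) (ereal c) = 1"
    by (intro xinv_const continuous_on_interim) (auto simp: const_others_def)
  moreover have "xinv (interim n (ws j')) (ereal c) \<le> xinv_others n m ws j c"
    unfolding xinv_others_def using j' xinv_range[OF continuous_on_interim]
    by (intro member_le_sum) (auto simp: const_others_def)
  ultimately show False using assms by simp
qed

lemma Qfun_update:
  assumes "j < m"
  shows "Qfun m (\<lambda>j'. interim n ((ws(j := w)) j')) y = xinv (interim n w) (ereal y) + xinv_others n m ws j y"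
proof -
  have "{..<m} = insert j {j'. j' < m \<and> j' \<noteq> j}" using assms by auto
  then show ?thesis
    unfolding Qfun_def xinv_others_def by (auto intro!: sum.cong)
qed

lemma Phi_star_strict:
  assumes "j < m" "strictly_decr (interim n w)"
  shows "Phi_star n m (ws(j := w)) j \<theta> =
    xinv (interim n w) (Sup {ereal y | y. \<theta> \<le> xinv (interim n w) (ereal y) + xinv_others n m ws j y})"
  using assms(2) unfolding Phi_star_def Let_def Qinv_def Qfun_update[OF assms(1)] by simp

lemma le_Phi_star_strict_iff:
  assumes "j < m" "strictly_decr (interim n w)" "0 < \<phi>" "\<phi> \<le> 1"
  shows "\<phi> \<le> Phi_star n m (ws(j := w)) j \<theta> \<longleftrightarrow>
         (\<forall>\<psi>\<in>{0..<\<phi>}. \<psi> + xinv_others n m ws j (interim n w \<psi>) < \<theta>)"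
  unfolding Phi_star_strict[OF assms(1,2)]
  using below_threshold_if_le_xinv_Sup[where G = "xinv_others n m ws j", OF continuous_on_interim assms(2,3,4)]
    le_xinv_Sup_if_below_threshold[where G = "xinv_others n m ws j",
      OF continuous_on_interim assms(2) xinv_others_antimono assms(3,4)]
  by blast

lemma Phi_star_const:
  fixes ws :: "nat \<Rightarrow> nat \<Rightarrow> real"
  assumes "j < m" "const_on01 (interim n w)"
  defines "c \<equiv> interim n w 0"
  defines "S \<equiv> (\<Sum>j'\<in>strict_others n m ws j. xinv (interim n (ws j')) (ereal c))"
    and "K \<equiv> card {j'\<in>const_others n m ws j. interim n (ws j') 0 = c}"
  shows "Phi_star n m (ws(j := w)) j \<theta> =
    (if \<forall>j'\<in>const_others n m ws j. interim n (ws j') 0 \<le> c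
     then max 0 (\<theta> - min 1 S) / real (Suc K) else 0)"
proof -
  define xs where "xs = (\<lambda>j'. interim n ((ws(j := w)) j'))"
  define Oc where "Oc = const_others n m ws j"
  have nsd: "\<not> strictly_decr (xs j)" and cj: "const_on01 (xs j)"
    using assms(2) const_on01_not_strictly_decr by (auto simp: xs_def)
  have C: "{j'. j' < m \<and> const_on01 (xs j')} = insert j Oc"
    using assms(1,2) by (auto simp: xs_def Oc_def const_others_def)
  have S: "{j'. j' < m \<and> strictly_decr (xs j')} = strict_others n m ws j"
    using nsd by (auto simp: xs_def strict_others_def)
  have img: "(\<lambda>j'. xs j' 0) ` insert j Oc = insert c ((\<lambda>j'. interim n (ws j') 0) ` Oc)"
    by (auto simp: xs_def c_def Oc_def const_others_def)
  have "xs j 0 = c" "j \<notin> Oc" "finite Oc" by (simp_all add: xs_def c_def Oc_def const_others_def)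
  have Phi: "Phi_star n m (ws(j := w)) j \<theta> =
     (let xstar = Max (insert c ((\<lambda>j'. interim n (ws j') 0) ` Oc));
          M1 = {j'\<in>insert j Oc. xs j' 0 = xstar}
      in if j \<in> M1 then max 0 (\<theta> - min 1 (\<Sum>j'\<in>strict_others n m ws j. xinv (xs j') (ereal xstar)))
                        / real (card M1) else 0)"
    unfolding Phi_star_def xs_def[symmetric] Let_def C S img if_not_P[OF nsd] if_P[OF cj] ..
  show ?thesis
  proof (cases "\<forall>j'\<in>Oc. interim n (ws j') 0 \<le> c")
    case True
    then have "Max (insert c ((\<lambda>j'. interim n (ws j') 0) ` Oc)) = c"
      using \<open>finite Oc\<close> by (intro Max_eqI) auto
    moreover have "{j'\<in>insert j Oc. xs j' 0 = c} = insert j {j'\<in>Oc. interim n (ws j') 0 = c}"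
      using \<open>j \<notin> Oc\<close> by (auto simp: xs_def c_def)
    moreover have "(\<Sum>j'\<in>strict_others n m ws j. xinv (xs j') (ereal c)) = S"
      unfolding S_def xs_def by (intro sum.cong) (auto simp: strict_others_def)
    ultimately show ?thesis
      using True \<open>xs j 0 = c\<close> \<open>j \<notin> Oc\<close> \<open>finite Oc\<close> by (simp add: Phi Oc_def K_def)
  next
    case False
    then obtain j0 where "j0 \<in> Oc" "c < interim n (ws j0) 0" by force
    then have "c < Max (insert c ((\<lambda>j'. interim n (ws j') 0) ` Oc))"
      using \<open>finite Oc\<close> by (intro less_le_trans[OF _ Max_ge]) auto
    then show ?thesis
      unfolding Oc_def[symmetric] if_not_P[OF False] Phi Let_def using \<open>xs j 0 = c\<close> by simp
  qed
qed

section \<open>The participation bound\<close>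

text \<open>The criterion \<open>le_Phi_star_strict_iff\<close>, with the interim allocation of contest \<open>j\<close>
  replaced by the envelope of the simple contests.\<close>

definition attracts_at :: "nat \<Rightarrow> nat \<Rightarrow> (nat \<Rightarrow> nat \<Rightarrow> real) \<Rightarrow> nat \<Rightarrow> real \<Rightarrow> real \<Rightarrow> real \<Rightarrow> bool" where
  "attracts_at n m ws j T \<theta> \<psi> \<longleftrightarrow> (\<exists>k\<in>{1..n}. \<psi> + xinv_others n m ws j (T * xi n k \<psi>) < \<theta>)"

definition participation_bound :: "nat \<Rightarrow> nat \<Rightarrow> (nat \<Rightarrow> nat \<Rightarrow> real) \<Rightarrow> nat \<Rightarrow> real \<Rightarrow> real \<Rightarrow> real" where
  "participation_bound n m ws j T \<theta> = Sup {\<phi>\<in>{0..1}. \<forall>\<psi>\<in>{0..<\<phi>}. attracts_at n m ws j T \<theta> \<psi>}"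

lemma participation_bound_set:
  "0 \<in> {\<phi>\<in>{0..1}. \<forall>\<psi>\<in>{0..<\<phi>}. attracts_at n m ws j T \<theta> \<psi>}"
  "bdd_above {\<phi>\<in>{0..1}. \<forall>\<psi>\<in>{0..<\<phi>}. attracts_at n m ws j T \<theta> \<psi>}"
  by (auto intro: bdd_aboveI[of _ 1])

lemma le_participation_bound:
  assumes "\<phi> \<in> {0..1}" "\<And>\<psi>. \<psi> \<in> {0..<\<phi>} \<Longrightarrow> attracts_at n m ws j T \<theta> \<psi>"
  shows "\<phi> \<le> participation_bound n m ws j T \<theta>"
  unfolding participation_bound_def using assms by (intro cSup_upper participation_bound_set) auto

lemma participation_bound_nonneg: "0 \<le> participation_bound n m ws j T \<theta>"
  by (rule le_participation_bound) auto

lemma participation_bound_le_1: "participation_bound n m ws j T \<theta> \<le> 1"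
proof -
  have "{\<phi>\<in>{0..1}. \<forall>\<psi>\<in>{0..<\<phi>}. attracts_at n m ws j T \<theta> \<psi>} \<noteq> {}"
    using participation_bound_set(1) by blast
  then show ?thesis unfolding participation_bound_def by (rule cSup_least) auto
qed

lemma attracts_at_below_participation_bound:
  assumes "0 \<le> \<psi>" "\<psi> < participation_bound n m ws j T \<theta>"
  shows "attracts_at n m ws j T \<theta> \<psi>"
proof -
  obtain \<phi> where "\<phi> \<in> {0..1}" "\<forall>\<psi>\<in>{0..<\<phi>}. attracts_at n m ws j T \<theta> \<psi>" "\<psi> < \<phi>"
    using assms(2) less_cSup_iff[OF _ participation_bound_set(2)] participation_bound_set(1)
    unfolding participation_bound_def by blast
  then show ?thesis using assms(1) by auto
qed

lemma Phi_star_strict_le_participation_bound: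
  assumes "j < m" "1 \<le> n" "feasible n T w" "strictly_decr (interim n w)"
  shows "Phi_star n m (ws(j := w)) j \<theta> \<le> participation_bound n m ws j T \<theta>"
proof (cases "Phi_star n m (ws(j := w)) j \<theta> = 0")
  case False
  define p where "p = Phi_star n m (ws(j := w)) j \<theta>"
  have "p \<in> {0..1}"
    unfolding p_def Phi_star_strict[OF assms(1,4)] by (rule xinv_range[OF continuous_on_interim])
  with False have p: "0 < p" "p \<le> 1" by (auto simp: p_def)
  have "attracts_at n m ws j T \<theta> \<psi>" if \<psi>: "\<psi> \<in> {0..<p}" for \<psi>
  proof -
    obtain k where k: "k \<in> {1..n}" "interim n w \<psi> \<le> T * xi n k \<psi>"
      using interim_le_simple_envelope[OF assms(3,2), of \<psi>] \<psi> p by auto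
    have "\<psi> + xinv_others n m ws j (interim n w \<psi>) < \<theta>"
      using le_Phi_star_strict_iff[OF assms(1,4) p, of ws \<theta>] \<psi> by (simp add: p_def)
    moreover have "xinv_others n m ws j (T * xi n k \<psi>) \<le> xinv_others n m ws j (interim n w \<psi>)"
      using k(2) by (rule xinv_others_antimono)
    ultimately show ?thesis
      unfolding attracts_at_def using k(1) by (intro bexI[of _ k]) auto
  qed
  then show ?thesis
    using \<open>p \<in> {0..1}\<close> by (auto simp: p_def intro: le_participation_bound)
qed (simp add: participation_bound_nonneg)

lemma attracts_at_if_above_const_others:
  assumes "1 \<le> n" "\<forall>j'<m. j' \<noteq> j \<longrightarrow> feasible n (Ts j') (ws j')"
    and "k \<in> {1..n}" "c \<le> T * xi n k \<psi>"
    and "\<forall>j'\<in>const_others n m ws j. interim n (ws j') 0 < T * xi n k \<psi>"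
    and "\<psi> + (\<Sum>j'\<in>strict_others n m ws j. xinv (interim n (ws j')) (ereal c)) < \<theta>"
  shows "attracts_at n m ws j T \<theta> \<psi>"
  using xinv_others_le_strict_others[OF assms(1,2,4,5)] assms(3,6)
  unfolding attracts_at_def by (intro bexI[of _ k]) auto

text \<open>With \<open>K > 0\<close> ties the share is below \<open>(\<theta> - S)/2 \<le> 1/2\<close>, and below \<open>1/2\<close> the
  contest with \<open>n - 1\<close> prizes already exceeds the uniform level \<open>T/n\<close>.\<close>

lemma attracts_at_below_const_share:
  fixes n m j :: nat and ws :: "nat \<Rightarrow> nat \<Rightarrow> real" and c :: real
  defines "S \<equiv> (\<Sum>j'\<in>strict_others n m ws j. xinv (interim n (ws j')) (ereal c))"
    and "K \<equiv> card {j'\<in>const_others n m ws j. interim n (ws j') 0 = c}"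
  assumes "2 \<le> n" and others: "\<forall>j'<m. j' \<noteq> j \<longrightarrow> feasible n (Ts j') (ws j')"
    and "\<theta> \<le> 1" "0 < T" "c \<le> T / real n"
    and below: "\<forall>j'\<in>const_others n m ws j. interim n (ws j') 0 \<le> c"
    and \<psi>: "0 \<le> \<psi>" "\<psi> < (\<theta> - S) / real (Suc K)"
  shows "attracts_at n m ws j T \<theta> \<psi>"
proof -
  have "1 \<le> n" using assms(3) by simp
  have "0 \<le> S"
    unfolding S_def using xinv_range[OF continuous_on_interim] by (intro sum_nonneg) auto
  have "0 < (\<theta> - S) / real (Suc K)" using \<psi> by linarith
  then have "S < \<theta>" by (simp add: zero_less_divide_iff)
  then have "(\<theta> - S) / real (Suc K) \<le> (\<theta> - S) / 1" by (intro divide_left_mono) auto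
  then have "\<psi> + S < \<theta>" using \<psi> by simp
  show ?thesis
  proof (cases "K = 0")
    case True
    then have "{j'\<in>const_others n m ws j. interim n (ws j') 0 = c} = {}"
      unfolding K_def using finite_const_others by simp
    then have "\<forall>j'\<in>const_others n m ws j. interim n (ws j') 0 < T * xi n n \<psi>"
      using below assms(7) xi_self[OF \<open>1 \<le> n\<close>] by fastforce
    then show ?thesis
      using \<open>\<psi> + S < \<theta>\<close> assms(7) xi_self[OF \<open>1 \<le> n\<close>] \<open>1 \<le> n\<close>
      by (intro attracts_at_if_above_const_others[OF \<open>1 \<le> n\<close> others, of n c]) (auto simp: S_def)
  next
    case False
    then have "(\<theta> - S) / real (Suc K) \<le> (\<theta> - S) / 2"
      using \<open>S < \<theta>\<close> by (intro divide_left_mono) auto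
    moreover have "(\<theta> - S) / 2 \<le> 1 / 2"
      using \<open>0 \<le> S\<close> assms(5) by (intro divide_right_mono) auto
    ultimately have "\<psi> < 1/2" using \<psi> by linarith
    then have "T * (1 / real n) < T * xi n (n - 1) \<psi>"
      using xi_pred_gt[OF assms(3), of \<psi>] \<psi> assms(6) by (intro mult_strict_left_mono) auto
    then show ?thesis
      using \<open>\<psi> + S < \<theta>\<close> assms(3,7) below
      by (intro attracts_at_if_above_const_others[OF \<open>1 \<le> n\<close> others, of "n - 1" c]) (auto simp: S_def)
  qed
qed

lemma Phi_star_const_le_participation_bound:
  fixes ws :: "nat \<Rightarrow> nat \<Rightarrow> real"
  assumes "j < m" "2 \<le> n" "feasible n T w" "const_on01 (interim n w)"
    and others: "\<forall>j'<m. j' \<noteq> j \<longrightarrow> feasible n (Ts j') (ws j')"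
    and "\<theta> \<le> 1" "0 < T"
  shows "Phi_star n m (ws(j := w)) j \<theta> \<le> participation_bound n m ws j T \<theta>"
proof -
  have "1 \<le> n" using assms(2) by simp
  define c where "c = interim n w 0"
  define S where "S = (\<Sum>j'\<in>strict_others n m ws j. xinv (interim n (ws j')) (ereal c))"
  define K where "K = card {j'\<in>const_others n m ws j. interim n (ws j') 0 = c}"
  have Phi: "Phi_star n m (ws(j := w)) j \<theta> =
    (if \<forall>j'\<in>const_others n m ws j. interim n (ws j') 0 \<le> c
     then max 0 (\<theta> - min 1 S) / real (Suc K) else 0)"
    unfolding c_def S_def K_def by (rule Phi_star_const[OF assms(1,4)])
  have "c = w n"
    using interim_at_1[OF \<open>1 \<le> n\<close>] const_on01_at_1[OF assms(4)] by (simp add: c_def)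
  then have c_le: "c \<le> T / real n"
    using feasible_last_prize_le[OF assms(3)] \<open>1 \<le> n\<close> by (simp add: field_simps)
  have "0 \<le> S"
    unfolding S_def using xinv_range[OF continuous_on_interim] by (intro sum_nonneg) auto
  show ?thesis
  proof (cases "(\<forall>j'\<in>const_others n m ws j. interim n (ws j') 0 \<le> c) \<and> S < \<theta>")
    case False
    then have "Phi_star n m (ws(j := w)) j \<theta> = 0"
      using assms(6) by (auto simp: Phi min_def)
    then show ?thesis by (simp add: participation_bound_nonneg)
  next
    case True
    define R where "R = (\<theta> - S) / real (Suc K)"
    have "Phi_star n m (ws(j := w)) j \<theta> = R"
      using True assms(6) by (simp add: Phi R_def min_def)
    moreover have "R \<le> \<theta> - S" "0 \<le> R"
      using True by (simp_all add: R_def divide_le_eq)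
    moreover have "attracts_at n m ws j T \<theta> \<psi>" if "\<psi> \<in> {0..<R}" for \<psi>
      using that True c_le unfolding R_def S_def K_def
      by (intro attracts_at_below_const_share[OF assms(2) others assms(6,7)]) auto
    ultimately show ?thesis
      using \<open>0 \<le> S\<close> assms(6) by (auto intro: le_participation_bound)
  qed
qed

lemma Phi_star_le_participation_bound:
  assumes "j < m" "2 \<le> n" "feasible n T w"
    and "\<forall>j'<m. j' \<noteq> j \<longrightarrow> feasible n (Ts j') (ws j')" "\<theta> \<le> 1" "0 < T"
  shows "Phi_star n m (ws(j := w)) j \<theta> \<le> participation_bound n m ws j T \<theta>"
  using interim_feasible_cases[OF assms(3)] assms(2)
    Phi_star_strict_le_participation_bound[OF assms(1) _ assms(3)]
    Phi_star_const_le_participation_bound[OF assms(1,2,3) _ assms(4,5,6)]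
  by auto

lemma add_xinv_others_lt_of_eventually:
  assumes "0 \<le> \<psi>" "\<psi> < participation_bound n m ws j T \<theta>"
    and "eventually (\<lambda>x. \<forall>k\<in>{1..n}. T * xi n k x \<le> a) (at_left (participation_bound n m ws j T \<theta>))"
  shows "\<psi> + xinv_others n m ws j a < \<theta>"
proof -
  have "eventually (\<lambda>x. (\<forall>k\<in>{1..n}. T * xi n k x \<le> a) \<and> x \<in> {\<psi><..<participation_bound n m ws j T \<theta>})
          (at_left (participation_bound n m ws j T \<theta>))"
    using assms(3) eventually_at_left_real[OF assms(2)] by (rule eventually_conj)
  then obtain x where x: "\<forall>k\<in>{1..n}. T * xi n k x \<le> a" "\<psi> < x" "x < participation_bound n m ws j T \<theta>"
    using eventually_happens'[OF trivial_limit_at_left_real] by fastforce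
  then obtain k where k: "k \<in> {1..n}" "x + xinv_others n m ws j (T * xi n k x) < \<theta>"
    using attracts_at_below_participation_bound[of x] assms(1) unfolding attracts_at_def by force
  have "xinv_others n m ws j a \<le> xinv_others n m ws j (T * xi n k x)"
    using x(1) k(1) by (intro xinv_others_antimono) blast
  then show ?thesis using k(2) x(2) by simp
qed

lemma participation_bound_le_Phi_star_simple:
  fixes n m j ks :: nat and ws :: "nat \<Rightarrow> nat \<Rightarrow> real" and T \<theta> :: real
  defines "p \<equiv> participation_bound n m ws j T \<theta>"
  assumes "j < m" "1 \<le> ks" "ks < n" "0 < T"
    and "\<forall>k\<in>{1..n}. xi n k p \<le> xi n ks p"
  shows "p \<le> Phi_star n m (ws(j := simple ks T)) j \<theta>"
proof -
  have decr: "strictly_decr (interim n (simple ks T))"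
    by (rule strictly_decr_interim_simple[OF assms(3,4,5)])
  have interim: "interim n (simple ks T) x = T * xi n ks x" for x
    using assms(4) by (simp add: interim_simple)
  show ?thesis
  proof (cases "p = 0")
    case True
    then show ?thesis
      using xinv_range[OF continuous_on_interim] by (simp add: Phi_star_strict[OF assms(2) decr])
  next
    case False
    then have p: "0 < p" "p \<le> 1"
      using participation_bound_nonneg participation_bound_le_1 unfolding p_def by (auto simp: less_le)
    have "\<psi> + xinv_others n m ws j (T * xi n ks \<psi>) < \<theta>" if \<psi>: "\<psi> \<in> {0..<p}" for \<psi>
    proof -
      have "T * xi n ks p < T * xi n ks \<psi>"
        using xi_strict_antimono[OF assms(3,4)] \<psi> p assms(5) by auto
      then have "\<forall>k\<in>{1..n}. T * xi n k p < T * xi n ks \<psi>"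
        using assms(5,6) by (auto intro: le_less_trans[OF mult_left_mono])
      then have "\<forall>k\<in>{1..n}. eventually (\<lambda>x. T * xi n k x < T * xi n ks \<psi>) (at_left p)"
        using eventually_at_left_xi_less by blast
      then have "eventually (\<lambda>x. \<forall>k\<in>{1..n}. T * xi n k x < T * xi n ks \<psi>) (at_left p)"
        by (intro eventually_ball_finite) auto
      then have "eventually (\<lambda>x. \<forall>k\<in>{1..n}. T * xi n k x \<le> T * xi n ks \<psi>) (at_left p)"
        by (rule eventually_mono) auto
      then show ?thesis
        using \<psi> unfolding p_def by (intro add_xinv_others_lt_of_eventually) auto
    qed
    then show ?thesis
      using le_Phi_star_strict_iff[OF assms(2) decr p] by (simp add: interim p_def)
  qed
qed

lemma participation_bound_add_xinv_others_le:
  fixes n m j :: nat and ws :: "nat \<Rightarrow> nat \<Rightarrow> real" and T \<theta> :: real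
  defines "p \<equiv> participation_bound n m ws j T \<theta>"
  assumes "1 \<le> n" "0 < T" "0 < p" "\<forall>k\<in>{1..<n}. xi n k p < xi n n p"
  shows "p + xinv_others n m ws j (T / real n) \<le> \<theta>"
proof -
  have "T * xi n k p < T / real n" if "k \<in> {1..<n}" for k
  proof -
    have "T * xi n k p < T * xi n n p" using assms(3,5) that by (intro mult_strict_left_mono) auto
    then show ?thesis using xi_self[OF assms(2)] by simp
  qed
  then have "\<forall>k\<in>{1..<n}. eventually (\<lambda>x. T * xi n k x < T / real n) (at_left p)"
    using eventually_at_left_xi_less by blast
  then have "eventually (\<lambda>x. \<forall>k\<in>{1..<n}. T * xi n k x < T / real n) (at_left p)"
    by (intro eventually_ball_finite) auto
  moreover have "T * xi n k x \<le> T / real n" if "\<forall>k\<in>{1..<n}. T * xi n k x < T / real n" "k \<in> {1..n}" for k x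
  proof (cases "k = n")
    case False
    then show ?thesis using that by (simp add: less_imp_le)
  qed (simp add: xi_self[OF assms(2)])
  ultimately have "eventually (\<lambda>x. \<forall>k\<in>{1..n}. T * xi n k x \<le> T / real n) (at_left p)"
    by (elim eventually_mono) blast
  then have "\<psi> + xinv_others n m ws j (T / real n) < \<theta>" if "0 < \<psi>" "\<psi> < p" for \<psi>
    using that unfolding p_def by (intro add_xinv_others_lt_of_eventually) auto
  then have "p \<le> \<theta> - xinv_others n m ws j (T / real n)"
    using dense_le_bounded[OF assms(4)] by force
  then show ?thesis by simp
qed

text \<open>A positive bound forces \<open>x\<^sub>-\<^sub>j\<^sup>-\<^sup>1(T/n) < 1\<close>, so no other constant contest ties with
  the uniform one and contest \<open>j\<close> gets the whole residual share.\<close>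

lemma participation_bound_le_Phi_star_uniform:
  fixes n m j :: nat and ws :: "nat \<Rightarrow> nat \<Rightarrow> real" and T \<theta> :: real
  defines "p \<equiv> participation_bound n m ws j T \<theta>"
  assumes "j < m" "2 \<le> n" "0 < T" "\<theta> \<le> 1"
    and "\<forall>k\<in>{1..<n}. xi n k p < xi n n p"
  shows "p \<le> Phi_star n m (ws(j := simple n T)) j \<theta>"
proof -
  have "1 \<le> n" using assms(3) by simp
  define c where "c = T / real n"
  have interim: "interim n (simple n T) x = c" for x
    using xi_self[OF \<open>1 \<le> n\<close>] by (simp add: interim_simple c_def)
  then have const: "const_on01 (interim n (simple n T))" by (simp add: const_on01_def)
  define S where "S = (\<Sum>j'\<in>strict_others n m ws j. xinv (interim n (ws j')) (ereal c))"
  define K where "K = card {j'\<in>const_others n m ws j. interim n (ws j') 0 = c}"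
  have Phi: "Phi_star n m (ws(j := simple n T)) j \<theta> =
    (if \<forall>j'\<in>const_others n m ws j. interim n (ws j') 0 \<le> c
     then max 0 (\<theta> - min 1 S) / real (Suc K) else 0)"
    using Phi_star_const[OF assms(2) const, of ws \<theta>] by (simp add: interim S_def K_def)
  show ?thesis
  proof (cases "p = 0")
    case True
    then show ?thesis by (simp add: Phi)
  next
    case False
    then have "0 < p" using participation_bound_nonneg by (simp add: p_def less_le)
    then have "p + xinv_others n m ws j c \<le> \<theta>"
      using participation_bound_add_xinv_others_le[OF \<open>1 \<le> n\<close> assms(4)] assms(6)
      by (simp add: p_def c_def)
    then have const_below: "\<forall>j'\<in>const_others n m ws j. interim n (ws j') 0 < c"
      using \<open>0 < p\<close> assms(5) by (intro const_others_below_if_xinv_others_lt_1) simp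
    then have "K = 0" unfolding K_def by (auto simp: card_eq_0_iff)
    have "S \<le> xinv_others n m ws j c"
      unfolding S_def xinv_others_def strict_others_def using xinv_range[OF continuous_on_interim]
      by (intro sum_mono2) auto
    then have "p \<le> max 0 (\<theta> - min 1 S) / real (Suc K)"
      using \<open>p + xinv_others n m ws j c \<le> \<theta>\<close> \<open>K = 0\<close> by simp
    then show ?thesis using const_below by (simp add: Phi less_imp_le)
  qed
qed

lemma simple_attains_participation_bound:
  fixes n m j :: nat and ws :: "nat \<Rightarrow> nat \<Rightarrow> real" and T \<theta> :: real
  defines "p \<equiv> participation_bound n m ws j T \<theta>"
  assumes "j < m" "2 \<le> n" "0 < T" "\<theta> \<le> 1"
  shows "\<exists>ks\<in>{1..n}. (\<forall>k\<in>{1..n}. xi n k p \<le> xi n ks p) \<and> p \<le> Phi_star n m (ws(j := simple ks T)) j \<theta>"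
proof -
  obtain k0 where k0: "k0 \<in> {1..n}" "\<forall>k\<in>{1..n}. xi n k p \<le> xi n k0 p"
    using finite_ex_arg_max[of "{1..n}" "\<lambda>k. xi n k p"] assms(3) by auto
  show ?thesis
  proof (cases "\<exists>k\<in>{1..<n}. xi n k0 p \<le> xi n k p")
    case True
    then obtain k where k: "k \<in> {1..<n}" "\<forall>k'\<in>{1..n}. xi n k' p \<le> xi n k p"
      using k0(2) by force
    then show ?thesis
      using participation_bound_le_Phi_star_simple[OF assms(2) _ _ assms(4)] unfolding p_def
      by (intro bexI[of _ k]) auto
  next
    case False
    then have "k0 = n" using k0(1) by fastforce
    with False have "\<forall>k\<in>{1..<n}. xi n k p < xi n n p" by (auto simp: not_le)
    then show ?thesis
      using k0 \<open>k0 = n\<close> participation_bound_le_Phi_star_uniform[OF assms(2,3,4,5)]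
      unfolding p_def by (intro bexI[of _ n]) auto
  qed
qed

theorem theorem4:
  fixes n m j :: nat and T :: "nat \<Rightarrow> real" and ws :: "nat \<Rightarrow> nat \<Rightarrow> real" and \<theta> :: real
  assumes "n \<ge> 2" and "m \<ge> 1" and "j < m"
    and "0 \<le> \<theta>" and "\<theta> \<le> 1" and "T j > 0"
    and "\<forall>j'<m. j' \<noteq> j \<longrightarrow> feasible n (T j') (ws j')"
  shows "\<exists>kstar\<in>{1..n}.
           (\<forall>w. feasible n (T j) w \<longrightarrow>
                 R_hat n m (ws(j := w)) j \<theta> \<le> R_hat n m (ws(j := simple kstar (T j))) j \<theta>)
         \<and> (let \<phi>star = Phi_star n m (ws(j := simple kstar (T j))) j \<theta>
            in \<forall>k\<in>{1..n}. xi n k \<phi>star \<le> xi n kstar \<phi>star)"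
proof -
  define p where "p = participation_bound n m ws j (T j) \<theta>"
  have bound: "Phi_star n m (ws(j := w)) j \<theta> \<le> p" if "feasible n (T j) w" for w
    unfolding p_def using Phi_star_le_participation_bound[OF assms(3,1) that assms(7,5,6)] .
  obtain ks where ks: "ks \<in> {1..n}" "\<forall>k\<in>{1..n}. xi n k p \<le> xi n ks p"
    and "p \<le> Phi_star n m (ws(j := simple ks (T j))) j \<theta>"
    using simple_attains_participation_bound[OF assms(3,1,6,5)] unfolding p_def by blast
  moreover have "Phi_star n m (ws(j := simple ks (T j))) j \<theta> \<le> p"
    using ks(1) assms(6) by (intro bound feasible_simple) auto
  ultimately have attained: "Phi_star n m (ws(j := simple ks (T j))) j \<theta> = p" by simp
  show ?thesis
    using bound ks by (intro bexI[OF _ ks(1)]) (auto simp: R_hat_def attained Let_def)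
qed

end
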